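(* Let $G=(V,E)$ be a multigraph with vertices $u_1,\dots,u_k$ ($k\ge2$) and edges $e_1,\dots,e_\ell$ with $\ell>2k$, and consider the fair division instance $\mathcal{I}(G)$ described in the context. If $G$ has no independent set of size larger than $t$, then every EF1 allocation of $\mathcal{I}(G)$ has social welfare at most $t+2$.
   Context: Instance $\mathcal{I}(G)$: agents are $a_i^{(j)}$ ($1\le i\le\ell$, $1\le j\le k$) and $s^{(j)}$ ($1\le j\le k$), so $n=k\ell+k$. Items are $b_r^{(j)}$ ($1\le r\le k$, $1\le j\le k$), with $B^{(j)}=\{b_1^{(j)},\dots,b_k^{(j)}\}$, and $c_1,\dots,c_{k^2}$ forming $C$, so $m=2k^2$. Let $\tau=2/k^2$. Agent $s^{(j)}$ values each item of $B^{(j)}$ at $1/k$ and every other item at $0$. If edge $e_i$ has endpoints $u_{i_1},u_{i_2}$, agent $a_i^{(j)}$ values each of $b_{i_1}^{(j)},b_{i_2}^{(j)}$ at $\tau/2$, each item of $C$ at $(1-\tau)/k^2$, and every other item at $0$. Valuations are additive (and normalized). An allocation is a partition of the items among agents; it is EF1 if for all agents $x\ne y$ with $A_y\ne\emptyset$ there is $g\in A_y$ with $v_x(A_x)\ge v_x(A_y\setminus\{g\})$; social welfare is $\sum_x v_x(A_x)$. An independent set is a set of vertices no two of which are joined by an edge. *)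

theory Defs
  imports Complex_Main
begin

(* Vertices u_1..u_k are encoded as 0..k-1, edges e_1..e_l as 0..l-1.
   Edge i has endpoints end1 i and end2 i. *)

datatype agent = AgA nat nat  (* AgA i j  = a_i^(j) *)
              | AgS nat

datatype item = ItB nat nat   (* ItB r j  = b_r^(j) *)
              | ItC nat

definition agents :: "nat \<Rightarrow> nat \<Rightarrow> agent set" where
  "agents k l = {AgA i j | i j. i < l \<and> j < k} \<union> {AgS j | j. j < k}"

definition items :: "nat \<Rightarrow> item set" where
  "items k = {ItB r j | r j. r < k \<and> j < k} \<union> {ItC c | c. c < k^2}"

definition tau :: "nat \<Rightarrow> real" where
  "tau k = 2 / (real k)^2"

fun val :: "nat \<Rightarrow> (nat \<Rightarrow> nat) \<Rightarrow> (nat \<Rightarrow> nat) \<Rightarrow> agent \<Rightarrow> item \<Rightarrow> real" where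
  "val k e1 e2 (AgS j) (ItB r j') = (if j' = j then 1 / real k else 0)"
| "val k e1 e2 (AgS j) (ItC c) = 0"
| "val k e1 e2 (AgA i j) (ItB r j') =
     (if j' = j \<and> (r = e1 i \<or> r = e2 i) then tau k / 2 else 0)"
| "val k e1 e2 (AgA i j) (ItC c) = (1 - tau k) / (real k)^2"

definition v :: "nat \<Rightarrow> (nat \<Rightarrow> nat) \<Rightarrow> (nat \<Rightarrow> nat) \<Rightarrow> agent \<Rightarrow> item set \<Rightarrow> real" where
  "v k e1 e2 x S = (\<Sum>g\<in>S. val k e1 e2 x g)"

(* An allocation (partition of the items among agents) is a map item \<Rightarrow> agent
   sending every item to an agent; the bundle_of of x is the preimage of x. *)
definition is_allocation :: "nat \<Rightarrow> nat \<Rightarrow> (item \<Rightarrow> agent) \<Rightarrow> bool" where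
  "is_allocation k l \<pi> \<longleftrightarrow> (\<forall>g\<in>items k. \<pi> g \<in> agents k l)"

definition bundle_of :: "nat \<Rightarrow> (item \<Rightarrow> agent) \<Rightarrow> agent \<Rightarrow> item set" where
  "bundle_of k \<pi> x = {g \<in> items k. \<pi> g = x}"

definition EF1 :: "nat \<Rightarrow> nat \<Rightarrow> (nat \<Rightarrow> nat) \<Rightarrow> (nat \<Rightarrow> nat) \<Rightarrow> (item \<Rightarrow> agent) \<Rightarrow> bool" where
  "EF1 k l e1 e2 \<pi> \<longleftrightarrow>
     (\<forall>x\<in>agents k l. \<forall>y\<in>agents k l. x \<noteq> y \<and> bundle_of k \<pi> y \<noteq> {} \<longrightarrow>
        (\<exists>g\<in>bundle_of k \<pi> y. v k e1 e2 x (bundle_of k \<pi> x) \<ge> v k e1 e2 x (bundle_of k \<pi> y - {g})))"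

definition social_welfare :: "nat \<Rightarrow> nat \<Rightarrow> (nat \<Rightarrow> nat) \<Rightarrow> (nat \<Rightarrow> nat) \<Rightarrow> (item \<Rightarrow> agent) \<Rightarrow> real" where
  "social_welfare k l e1 e2 \<pi> = (\<Sum>x\<in>agents k l. v k e1 e2 x (bundle_of k \<pi> x))"

definition independent_set :: "nat \<Rightarrow> nat \<Rightarrow> (nat \<Rightarrow> nat) \<Rightarrow> (nat \<Rightarrow> nat) \<Rightarrow> nat set \<Rightarrow> bool" where
  "independent_set k l e1 e2 I \<longleftrightarrow>
     I \<subseteq> {0..<k} \<and> (\<forall>i<l. \<not> (e1 i \<in> I \<and> e2 i \<in> I))"

end

theory Submission
  imports Defs
begin

text \<open>Since there are \<open>k\<ell> > 2k\<^sup>2 = m\<close> agents \<open>a_i^(j)\<close>, one of them receives nothing.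
  These agents value every item of \<open>C\<close> positively, so EF1 towards the empty one leaves every
  agent with at most one item of \<open>C\<close>. If \<open>s^(j)\<close> held both \<open>b_{i1}^(j)\<close> and \<open>b_{i2}^(j)\<close> for an
  edge \<open>e_i\<close>, then \<open>a_i^(j)\<close> would value its own bundle at most \<open>(1 - \<tau>)/k\<^sup>2\<close> but the bundle
  of \<open>s^(j)\<close> minus any single item at least \<open>\<tau>/2 = 1/k\<^sup>2\<close>. Hence the indices of the items of
  \<open>B^(j)\<close> kept by \<open>s^(j)\<close> form an independent set. Each such item contributes \<open>1/k\<close> to the
  welfare and every other item at most \<open>1/k\<^sup>2\<close>, so the welfare is at most
  \<open>m/k\<^sup>2 + k \<cdot> t/k = 2 + t\<close>.\<close>

lemma items_eq: "items k = (\<lambda>(r, j). ItB r j) ` ({..<k} \<times> {..<k}) \<union> ItC ` {..<k^2}"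
  by (auto simp: items_def)

lemma inj_ItB: "inj (\<lambda>(r, j). ItB r j)"
  by (auto simp: inj_def)

lemma finite_items: "finite (items k)"
  unfolding items_eq by simp

lemma card_items: "card (items k) = 2 * k^2"
proof -
  have "card (items k) =
      card ((\<lambda>(r, j). ItB r j) ` ({..<k} \<times> {..<k})) + card (ItC ` {..<k^2})"
    unfolding items_eq by (rule card_Un_disjoint) auto
  also have "\<dots> = 2 * k^2"
    by (simp add: card_image inj_on_subset [OF inj_ItB] inj_on_def power2_eq_square)
  finally show ?thesis .
qed

lemma sum_items:
  "(\<Sum>g\<in>items k. h g) = (\<Sum>j<k. \<Sum>r<k. h (ItB r j)) + (\<Sum>c<k^2. h (ItC c))"
proof -
  have "(\<Sum>g\<in>items k. h g) =
      (\<Sum>g\<in>(\<lambda>(r, j). ItB r j) ` ({..<k} \<times> {..<k}). h g) + (\<Sum>g\<in>ItC ` {..<k^2}. h g)"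
    unfolding items_eq by (rule sum.union_disjoint) auto
  also have "(\<Sum>g\<in>(\<lambda>(r, j). ItB r j) ` ({..<k} \<times> {..<k}). h g) =
      (\<Sum>(r, j)\<in>{..<k} \<times> {..<k}. h (ItB r j))"
    by (rule sum.reindex_cong [OF inj_on_subset [OF inj_ItB]]) auto
  also have "\<dots> = (\<Sum>r<k. \<Sum>j<k. h (ItB r j))"
    by (rule sum.cartesian_product [symmetric])
  also have "\<dots> = (\<Sum>j<k. \<Sum>r<k. h (ItB r j))"
    by (rule sum.swap)
  also have "(\<Sum>g\<in>ItC ` {..<k^2}. h g) = (\<Sum>c<k^2. h (ItC c))"
    by (simp add: sum.reindex inj_on_def)
  finally show ?thesis .
qed

lemma agents_eq: "agents k l = (\<lambda>(i, j). AgA i j) ` ({..<l} \<times> {..<k}) \<union> AgS ` {..<k}"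
  by (auto simp: agents_def)

lemma finite_agents: "finite (agents k l)"
  unfolding agents_eq by simp

lemma finite_bundle_of: "finite (bundle_of k \<pi> x)"
  unfolding bundle_of_def using finite_items by simp

lemma tau_half: "tau k / 2 = 1 / (real k)^2"
  by (simp add: tau_def)

lemma tau_bounds:
  assumes "k \<ge> 2"
  shows "0 < tau k" "tau k < 1"
proof -
  have "(real k)^2 \<ge> 2 * 2"
    using assms unfolding power2_eq_square by (intro mult_mono) auto
  then show "0 < tau k" "tau k < 1"
    using assms by (auto simp: tau_def divide_simps)
qed

lemma val_nonneg: "k \<ge> 2 \<Longrightarrow> 0 \<le> val k e1 e2 x g"
  using tau_bounds [of k] by (cases x; cases g) auto

lemma val_le_v: "k \<ge> 2 \<Longrightarrow> finite S \<Longrightarrow> g \<in> S \<Longrightarrow> val k e1 e2 x g \<le> v k e1 e2 x S"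
  unfolding v_def by (rule member_le_sum) (auto intro: val_nonneg)

lemma val_AgA_ItC_pos: "k \<ge> 2 \<Longrightarrow> 0 < val k e1 e2 (AgA i j) (ItC c)"
  using tau_bounds [of k] by simp

lemma val_ItC_le: "k \<ge> 2 \<Longrightarrow> val k e1 e2 x (ItC c) \<le> 1 / (real k)^2"
  using tau_bounds [of k] by (cases x) (auto intro: divide_right_mono)

lemma val_ItB_le:
  "val k e1 e2 x (ItB r j) \<le> 1 / (real k)^2 + (if x = AgS j then 1 / real k else 0)"
  using tau_half [of k] by (cases x) auto

lemma v_AgA_le:
  assumes "k \<ge> 2" and "finite S"
    and B: "\<And>r j'. ItB r j' \<in> S \<Longrightarrow> val k e1 e2 (AgA i j) (ItB r j') = 0"
    and C: "\<And>c c'. ItC c \<in> S \<Longrightarrow> ItC c' \<in> S \<Longrightarrow> c = c'"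
  shows "v k e1 e2 (AgA i j) S \<le> (1 - tau k) / (real k)^2"
proof -
  let ?SC = "S \<inter> range ItC"
  have "val k e1 e2 (AgA i j) g = 0" if "g \<in> S - ?SC" for g
    using that B by (cases g) auto
  then have "v k e1 e2 (AgA i j) S = (\<Sum>g\<in>?SC. val k e1 e2 (AgA i j) g)"
    unfolding v_def using assms(2) by (intro sum.mono_neutral_right) auto
  also have "\<dots> = real (card ?SC) * ((1 - tau k) / (real k)^2)"
    by (subst sum.cong [OF refl, of _ _ "\<lambda>_. (1 - tau k) / (real k)^2"]) auto
  also have "card ?SC \<le> 1"
    using C assms(2) by (auto simp: card_le_Suc0_iff_eq)
  then have "real (card ?SC) * ((1 - tau k) / (real k)^2) \<le> (1 - tau k) / (real k)^2"
    using tau_bounds [OF assms(1)] by (intro mult_left_le_one_le) auto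
  finally show ?thesis .
qed

lemma social_welfare_eq_sum_items:
  assumes "is_allocation k l \<pi>"
  shows "social_welfare k l e1 e2 \<pi> = (\<Sum>g\<in>items k. val k e1 e2 (\<pi> g) g)"
proof -
  have "social_welfare k l e1 e2 \<pi> =
      (\<Sum>x\<in>agents k l. \<Sum>g\<in>{g \<in> items k. \<pi> g = x}. val k e1 e2 (\<pi> g) g)"
    unfolding social_welfare_def v_def bundle_of_def by (intro sum.cong refl) auto
  also have "\<dots> = (\<Sum>g\<in>items k. val k e1 e2 (\<pi> g) g)"
    using assms finite_items finite_agents unfolding is_allocation_def
    by (intro sum.group) auto
  finally show ?thesis .
qed

definition kept_by_s :: "nat \<Rightarrow> (item \<Rightarrow> agent) \<Rightarrow> nat \<Rightarrow> nat set" where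
  "kept_by_s k \<pi> j = {r. r < k \<and> \<pi> (ItB r j) = AgS j}"

lemma social_welfare_le:
  assumes "k \<ge> 2" and "is_allocation k l \<pi>"
  shows "social_welfare k l e1 e2 \<pi> \<le> 2 + (\<Sum>j<k. real (card (kept_by_s k \<pi> j)) / real k)"
proof -
  let ?val = "\<lambda>g. val k e1 e2 (\<pi> g) g"
  have kept: "(\<Sum>r<k. if \<pi> (ItB r j) = AgS j then 1 / real k else 0)
      = real (card (kept_by_s k \<pi> j)) / real k" for j
  proof -
    have "{r \<in> {..<k}. \<pi> (ItB r j) = AgS j} = kept_by_s k \<pi> j"
      by (auto simp: kept_by_s_def)
    then show ?thesis
      by (simp add: sum.inter_filter [symmetric])
  qed
  have "(\<Sum>j<k. \<Sum>r<k. ?val (ItB r j))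
      \<le> (\<Sum>j<k. \<Sum>r<k. 1 / (real k)^2 + (if \<pi> (ItB r j) = AgS j then 1 / real k else 0))"
    by (intro sum_mono val_ItB_le)
  also have "\<dots> = 1 + (\<Sum>j<k. real (card (kept_by_s k \<pi> j)) / real k)"
    using assms(1) by (simp add: sum.distrib kept power2_eq_square)
  finally have B: "(\<Sum>j<k. \<Sum>r<k. ?val (ItB r j)) \<le> \<dots>" .
  have "(\<Sum>c<k^2. ?val (ItC c)) \<le> (\<Sum>c<k^2. 1 / (real k)^2)"
    by (intro sum_mono val_ItC_le assms(1))
  also have "\<dots> = 1"
    using assms(1) by simp
  finally have C: "(\<Sum>c<k^2. ?val (ItC c)) \<le> 1" .
  show ?thesis
    using B C unfolding social_welfare_eq_sum_items [OF assms(2)] sum_items by linarith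
qed

lemma bundle_of_eq_empty_iff: "bundle_of k \<pi> x = {} \<longleftrightarrow> x \<notin> \<pi> ` items k"
  by (auto simp: bundle_of_def)

lemma card_edge_agents: "card ((\<lambda>(i, j). AgA i j) ` ({..<l} \<times> {..<k})) = l * k"
  by (subst card_image) (auto simp: inj_on_def)

lemma exists_empty_edge_agent:
  assumes "0 < k" and "2 * k < l" and "is_allocation k l \<pi>"
  obtains i j where "i < l" "j < k" "bundle_of k \<pi> (AgA i j) = {}"
proof -
  let ?A = "(\<lambda>(i, j). AgA i j) ` ({..<l} \<times> {..<k})"
  have "card (\<pi> ` items k) < card ?A"
  proof -
    have "card (\<pi> ` items k) \<le> 2 * k * k"
      using card_image_le [OF finite_items, of \<pi> k] by (simp add: card_items power2_eq_square)
    also have "\<dots> < l * k"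
      using assms(1,2) by simp
    finally show ?thesis
      by (simp add: card_edge_agents)
  qed
  then have "\<not> ?A \<subseteq> \<pi> ` items k"
    using card_mono [OF finite_imageI [OF finite_items]] by (meson leD)
  then obtain i j where "i < l" "j < k" "AgA i j \<notin> \<pi> ` items k"
    by auto
  then show thesis
    by (intro that) (simp_all add: bundle_of_eq_empty_iff)
qed

lemma EF1_two_items:
  assumes "k \<ge> 2" and "EF1 k l e1 e2 \<pi>"
    and "x \<in> agents k l" "y \<in> agents k l" "x \<noteq> y"
    and "g1 \<in> bundle_of k \<pi> y" "g2 \<in> bundle_of k \<pi> y" "g1 \<noteq> g2"
    and "c \<le> val k e1 e2 x g1" "c \<le> val k e1 e2 x g2"
  shows "c \<le> v k e1 e2 x (bundle_of k \<pi> x)"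
proof -
  obtain g where le: "v k e1 e2 x (bundle_of k \<pi> y - {g}) \<le> v k e1 e2 x (bundle_of k \<pi> x)"
    using assms(2-6) unfolding EF1_def by blast
  obtain g' where "g' \<in> bundle_of k \<pi> y - {g}" "c \<le> val k e1 e2 x g'"
    using assms(6-10) by (cases "g = g1") auto
  then have "c \<le> v k e1 e2 x (bundle_of k \<pi> y - {g})"
    using val_le_v [OF assms(1)] finite_bundle_of by (meson finite_Diff order.trans)
  with le show ?thesis
    by linarith
qed

lemma EF1_at_most_one_ItC:
  assumes "k \<ge> 2" and "EF1 k l e1 e2 \<pi>"
    and "i0 < l" "j0 < k" "bundle_of k \<pi> (AgA i0 j0) = {}"
    and "x \<in> agents k l" "ItC c \<in> bundle_of k \<pi> x" "ItC c' \<in> bundle_of k \<pi> x"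
  shows "c = c'"
proof (rule ccontr)
  assume "c \<noteq> c'"
  have "x \<noteq> AgA i0 j0"
    using assms(5,7) by auto
  moreover have "AgA i0 j0 \<in> agents k l"
    using assms(3,4) by (auto simp: agents_def)
  ultimately have
    "val k e1 e2 (AgA i0 j0) (ItC c) \<le> v k e1 e2 (AgA i0 j0) (bundle_of k \<pi> (AgA i0 j0))"
    using \<open>c \<noteq> c'\<close> assms(1,2,6-8)
    by (intro EF1_two_items [of _ _ _ _ _ _ x "ItC c" "ItC c'"]) auto
  then show False
    using val_AgA_ItC_pos [OF assms(1)] assms(5) by (simp add: v_def)
qed

lemma kept_by_s_independent:
  assumes "k \<ge> 2" and "EF1 k l e1 e2 \<pi>" and "j < k"
    and edges: "\<forall>i<l. e1 i < k \<and> e2 i < k \<and> e1 i \<noteq> e2 i"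
    and one_ItC: "\<And>x c c'. x \<in> agents k l \<Longrightarrow> ItC c \<in> bundle_of k \<pi> x \<Longrightarrow>
      ItC c' \<in> bundle_of k \<pi> x \<Longrightarrow> c = c'"
  shows "independent_set k l e1 e2 (kept_by_s k \<pi> j)"
  unfolding independent_set_def
proof (intro conjI allI impI notI)
  show "kept_by_s k \<pi> j \<subseteq> {0..<k}"
    by (auto simp: kept_by_s_def)
next
  fix i
  assume "i < l" and both: "e1 i \<in> kept_by_s k \<pi> j \<and> e2 i \<in> kept_by_s k \<pi> j"
  have agents: "AgA i j \<in> agents k l" "AgS j \<in> agents k l"
    using \<open>i < l\<close> \<open>j < k\<close> by (auto simp: agents_def)
  have held: "ItB (e1 i) j \<in> bundle_of k \<pi> (AgS j)" "ItB (e2 i) j \<in> bundle_of k \<pi> (AgS j)"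
    using both \<open>j < k\<close> by (auto simp: kept_by_s_def bundle_of_def items_def)
  have "1 / (real k)^2 \<le> v k e1 e2 (AgA i j) (bundle_of k \<pi> (AgA i j))"
    using assms(1,2) agents held edges \<open>i < l\<close>
    by (intro EF1_two_items [of _ _ _ _ _ _ "AgS j" "ItB (e1 i) j" "ItB (e2 i) j"])
      (auto simp: tau_half)
  moreover have "v k e1 e2 (AgA i j) (bundle_of k \<pi> (AgA i j)) \<le> (1 - tau k) / (real k)^2"
  proof (rule v_AgA_le [OF assms(1) finite_bundle_of])
    fix r j'
    assume "ItB r j' \<in> bundle_of k \<pi> (AgA i j)"
    then show "val k e1 e2 (AgA i j) (ItB r j') = 0"
      using both by (auto simp: kept_by_s_def bundle_of_def)
  qed (use one_ItC agents in blast)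
  moreover have "(1 - tau k) / (real k)^2 < 1 / (real k)^2"
    using tau_bounds [OF assms(1)] assms(1) by (intro divide_strict_right_mono) auto
  ultimately show False
    by linarith
qed

theorem mainTheorem13:
  fixes k l t :: nat and e1 e2 :: "nat \<Rightarrow> nat" and \<pi> :: "item \<Rightarrow> agent"
  assumes "k \<ge> 2" and "l > 2 * k"
    and "\<forall>i<l. e1 i < k \<and> e2 i < k \<and> e1 i \<noteq> e2 i"
    and "\<forall>I. independent_set k l e1 e2 I \<longrightarrow> card I \<le> t"
    and "is_allocation k l \<pi>"
    and "EF1 k l e1 e2 \<pi>"
  shows "social_welfare k l e1 e2 \<pi> \<le> real t + 2"
proof -
  obtain i0 j0 where empty: "i0 < l" "j0 < k" "bundle_of k \<pi> (AgA i0 j0) = {}"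
    using exists_empty_edge_agent [of k l \<pi>] assms(1,2,5) by auto
  have "card (kept_by_s k \<pi> j) \<le> t" if "j < k" for j
    using assms(4) kept_by_s_independent [OF assms(1,6) that assms(3)]
      EF1_at_most_one_ItC [OF assms(1,6) empty] by blast
  then have "(\<Sum>j<k. real (card (kept_by_s k \<pi> j)) / real k) \<le> (\<Sum>j<k. real t / real k)"
    by (intro sum_mono divide_right_mono) auto
  also have "\<dots> = real t"
    using assms(1) by simp
  finally show ?thesis
    using social_welfare_le [OF assms(1,5), of e1 e2] by linarith
qed

end
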